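(* Let $(V,L,\varphi,E)$ be a valuation system. If $\varphi$ is $\Pi_{\aleph_1}$-extendible, then the hierarchy has collapsed at $\Pi_{\aleph_1}\varphi$.
   Context: $\aleph_1$ denotes the smallest uncountable ordinal. A valuation system $(V,L,\varphi,E)$ consists of: (i) a lattice $V$ which is $\sigma$-distributive (for every $a\in V$ and sequence $(b_n)$ with existing infimum, $\bigwedge_n(a\vee b_n)$ exists and equals $a\vee\bigwedge_n b_n$, and dually for suprema); (ii) a sublattice $L$ of $V$; (iii) a partially ordered abelian group $E$ which is R-complete (whenever $x_1\ge x_2\ge\cdots$ and $y_1\ge y_2\ge\cdots$ in $E$ are such that $\bigwedge_n(x_n+y_n)$ exists, $\bigwedge_n x_n$ and $\bigwedge_n y_n$ exist; dually for increasing sequences); (iv) a valuation $\varphi:L\to E$ (order-preserving, $\varphi(a\wedge b)+\varphi(a\vee b)=\varphi(a)+\varphi(b)$). A decreasing (resp. increasing) sequence $(a_n)$ in $L$ is $\varphi$-convergent if $\bigwedge_n a_n$ exists in $V$ and $\bigwedge_n\varphi(a_n)$ exists in $E$ (resp. with suprema). $\Pi L:=\{\bigwedge_n a_n:(a_n)\ \varphi\text{-convergent decreasing}\}$ and $\varphi$ is $\Pi$-extendible if there is a valuation $\Pi\varphi:\Pi L\to E$ with $\Pi\varphi(\bigwedge_n a_n)=\bigwedge_n\varphi(a_n)$ for all such sequences; $\Sigma L,\Sigma$-extendible, $\Sigma\varphi$ dually. Hierarchy (transfinite recursion): $\Pi_0\varphi=\Sigma_0\varphi=\varphi$ on $L$;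 $\varphi$ is $\Pi_{\alpha+1}$-extendible iff it is $\Sigma_\alpha$-extendible and $\Sigma_\alpha\varphi$ is $\Pi$-extendible, with $\Pi_{\alpha+1}L=\Pi(\Sigma_\alpha L)$, $\Pi_{\alpha+1}\varphi=\Pi(\Sigma_\alpha\varphi)$; $\varphi$ is $\Sigma_{\alpha+1}$-extendible iff it is $\Pi_\alpha$-extendible and $\Pi_\alpha\varphi$ is $\Sigma$-extendible, with $\Sigma_{\alpha+1}\varphi=\Sigma(\Pi_\alpha\varphi)$; at a limit $\lambda$, $\varphi$ is $\Pi_\lambda$-extendible iff $\Pi_\alpha$-extendible for all $\alpha<\lambda$, and then $\Pi_\lambda L=\bigcup_{\alpha<\lambda}\Pi_\alpha L$ with $\Pi_\lambda\varphi(c)=\Pi_\beta\varphi(c)$ for $c\in\Pi_\beta L$; similarly $\Sigma_\lambda$. The hierarchy has collapsed at $Q$, where $Q=\Pi_\alpha\varphi$ or $Q=\Sigma_\alpha\varphi$, if $\varphi$ is $\Pi_{\alpha+1}$- and $\Sigma_{\alpha+1}$-extendible and $\Pi(Q)=Q=\Sigma(Q)$ (i.e. $Q$ is $\Pi$- and $\Sigma$-extendible with $\Pi Q=Q=\Sigma Q$). *)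

theory Defs
  imports Main
begin

definition is_inf :: "'a::order set \<Rightarrow> 'a \<Rightarrow> bool" where
  "is_inf S x \<longleftrightarrow> (\<forall>y\<in>S. x \<le> y) \<and> (\<forall>z. (\<forall>y\<in>S. z \<le> y) \<longrightarrow> z \<le> x)"

definition is_sup :: "'a::order set \<Rightarrow> 'a \<Rightarrow> bool" where
  "is_sup S x \<longleftrightarrow> (\<forall>y\<in>S. y \<le> x) \<and> (\<forall>z. (\<forall>y\<in>S. y \<le> z) \<longrightarrow> x \<le> z)"

text \<open>The lattice V is the whole type 'v; sigma-distributivity of V.\<close>
definition sigma_distributive :: "'v::lattice itself \<Rightarrow> bool" where
  "sigma_distributive (T::'v itself) \<longleftrightarrow>
     (\<forall>(a::'v) (b::nat \<Rightarrow> 'v) (x::'v). is_inf (range b) x \<longrightarrow> is_inf (range (\<lambda>n. sup a (b n))) (sup a x)) \<and>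
     (\<forall>(a::'v) (b::nat \<Rightarrow> 'v) (x::'v). is_sup (range b) x \<longrightarrow> is_sup (range (\<lambda>n. inf a (b n))) (inf a x))"

definition R_complete :: "'e::ordered_ab_group_add itself \<Rightarrow> bool" where
  "R_complete (T::'e itself) \<longleftrightarrow>
     (\<forall>(x::nat \<Rightarrow> 'e) (y::nat \<Rightarrow> 'e). antimono x \<and> antimono y \<and> (\<exists>z. is_inf (range (\<lambda>n. x n + y n)) z)
         \<longrightarrow> (\<exists>u. is_inf (range x) u) \<and> (\<exists>u. is_inf (range y) u)) \<and>
     (\<forall>(x::nat \<Rightarrow> 'e) (y::nat \<Rightarrow> 'e). mono x \<and> mono y \<and> (\<exists>z. is_sup (range (\<lambda>n. x n + y n)) z)
         \<longrightarrow> (\<exists>u. is_sup (range x) u) \<and> (\<exists>u. is_sup (range y) u))"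

definition sublattice :: "'v::lattice set \<Rightarrow> bool" where
  "sublattice K \<longleftrightarrow> (\<forall>a\<in>K. \<forall>b\<in>K. inf a b \<in> K \<and> sup a b \<in> K)"

text \<open>A valuation on the (sub)lattice K (values outside K are irrelevant).\<close>
definition valuation :: "'v::lattice set \<Rightarrow> ('v \<Rightarrow> 'e::ordered_ab_group_add) \<Rightarrow> bool" where
  "valuation K f \<longleftrightarrow> sublattice K \<and>
     (\<forall>a\<in>K. \<forall>b\<in>K. a \<le> b \<longrightarrow> f a \<le> f b) \<and>
     (\<forall>a\<in>K. \<forall>b\<in>K. f (inf a b) + f (sup a b) = f a + f b)"

definition conv_dec :: "'v::lattice set \<Rightarrow> ('v \<Rightarrow> 'e::ordered_ab_group_add) \<Rightarrow> (nat \<Rightarrow> 'v) \<Rightarrow> bool" where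
  "conv_dec K f a \<longleftrightarrow> (\<forall>n. a n \<in> K) \<and> antimono a \<and>
     (\<exists>x. is_inf (range a) x) \<and> (\<exists>y. is_inf (range (\<lambda>n. f (a n))) y)"

definition conv_inc :: "'v::lattice set \<Rightarrow> ('v \<Rightarrow> 'e::ordered_ab_group_add) \<Rightarrow> (nat \<Rightarrow> 'v) \<Rightarrow> bool" where
  "conv_inc K f a \<longleftrightarrow> (\<forall>n. a n \<in> K) \<and> mono a \<and>
     (\<exists>x. is_sup (range a) x) \<and> (\<exists>y. is_sup (range (\<lambda>n. f (a n))) y)"

definition PiSet :: "'v::lattice set \<Rightarrow> ('v \<Rightarrow> 'e::ordered_ab_group_add) \<Rightarrow> 'v set" where
  "PiSet K f = {x. \<exists>a. conv_dec K f a \<and> is_inf (range a) x}"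

definition SigmaSet :: "'v::lattice set \<Rightarrow> ('v \<Rightarrow> 'e::ordered_ab_group_add) \<Rightarrow> 'v set" where
  "SigmaSet K f = {x. \<exists>a. conv_inc K f a \<and> is_sup (range a) x}"

definition Pi_extendible :: "'v::lattice set \<Rightarrow> ('v \<Rightarrow> 'e::ordered_ab_group_add) \<Rightarrow> bool" where
  "Pi_extendible K f \<longleftrightarrow> (\<exists>g. valuation (PiSet K f) g \<and>
     (\<forall>a x y. conv_dec K f a \<and> is_inf (range a) x \<and> is_inf (range (\<lambda>n. f (a n))) y \<longrightarrow> g x = y))"

definition Sigma_extendible :: "'v::lattice set \<Rightarrow> ('v \<Rightarrow> 'e::ordered_ab_group_add) \<Rightarrow> bool" where
  "Sigma_extendible K f \<longleftrightarrow> (\<exists>g. valuation (SigmaSet K f) g \<and>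
     (\<forall>a x y. conv_inc K f a \<and> is_sup (range a) x \<and> is_sup (range (\<lambda>n. f (a n))) y \<longrightarrow> g x = y))"

text \<open>The extended valuation (meaningful on PiSet K f when Pi_extendible K f holds).\<close>
definition PiVal :: "'v::lattice set \<Rightarrow> ('v \<Rightarrow> 'e::ordered_ab_group_add) \<Rightarrow> 'v \<Rightarrow> 'e" where
  "PiVal K f x = (THE y. \<exists>a. conv_dec K f a \<and> is_inf (range a) x \<and> is_inf (range (\<lambda>n. f (a n))) y)"

definition SigmaVal :: "'v::lattice set \<Rightarrow> ('v \<Rightarrow> 'e::ordered_ab_group_add) \<Rightarrow> 'v \<Rightarrow> 'e" where
  "SigmaVal K f x = (THE y. \<exists>a. conv_inc K f a \<and> is_sup (range a) x \<and> is_sup (range (\<lambda>n. f (a n))) y)"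

text \<open>A stage alpha records:
  (Pi_alpha-extendible, (Pi_alpha L, Pi_alpha phi), Sigma_alpha-extendible, (Sigma_alpha L, Sigma_alpha phi)).\<close>
type_synonym ('v, 'e) stage = "bool \<times> ('v set \<times> ('v \<Rightarrow> 'e)) \<times> bool \<times> ('v set \<times> ('v \<Rightarrow> 'e))"

definition pi_ext :: "('v, 'e) stage \<Rightarrow> bool" where "pi_ext s = fst s"
definition pi_set :: "('v, 'e) stage \<Rightarrow> 'v set" where "pi_set s = fst (fst (snd s))"
definition pi_val :: "('v, 'e) stage \<Rightarrow> 'v \<Rightarrow> 'e" where "pi_val s = snd (fst (snd s))"
definition sigma_ext :: "('v, 'e) stage \<Rightarrow> bool" where "sigma_ext s = fst (snd (snd s))"
definition sigma_set :: "('v, 'e) stage \<Rightarrow> 'v set" where "sigma_set s = fst (snd (snd (snd s)))"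
definition sigma_val :: "('v, 'e) stage \<Rightarrow> 'v \<Rightarrow> 'e" where "sigma_val s = snd (snd (snd (snd s)))"

definition succ_stage :: "('v::lattice, 'e::ordered_ab_group_add) stage \<Rightarrow> ('v, 'e) stage" where
  "succ_stage s =
     (sigma_ext s \<and> Pi_extendible (sigma_set s) (sigma_val s),
      (PiSet (sigma_set s) (sigma_val s), PiVal (sigma_set s) (sigma_val s)),
      pi_ext s \<and> Sigma_extendible (pi_set s) (pi_val s),
      (SigmaSet (pi_set s) (pi_val s), SigmaVal (pi_set s) (pi_val s)))"

definition limit_stage :: "'i set \<Rightarrow> ('i \<Rightarrow> ('v, 'e) stage) \<Rightarrow> ('v, 'e) stage" where
  "limit_stage S h =
     (\<forall>b\<in>S. pi_ext (h b),
      (\<Union>b\<in>S. pi_set (h b), \<lambda>c. pi_val (h (SOME b. b \<in> S \<and> c \<in> pi_set (h b))) c),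
      \<forall>b\<in>S. sigma_ext (h b),
      (\<Union>b\<in>S. sigma_set (h b), \<lambda>c. sigma_val (h (SOME b. b \<in> S \<and> c \<in> sigma_set (h b))) c))"

definition hier_F :: "'v::lattice set \<Rightarrow> ('v \<Rightarrow> 'e::ordered_ab_group_add) \<Rightarrow> 'i rel
     \<Rightarrow> ('i \<Rightarrow> ('v, 'e) stage) \<Rightarrow> 'i \<Rightarrow> ('v, 'e) stage" where
  "hier_F L phi W h a =
     (if (\<forall>b\<in>Field W. (a, b) \<in> W) then (True, (L, phi), True, (L, phi))
      else if (\<exists>b. (b, a) \<in> W - Id \<and> (\<forall>c. (c, a) \<in> W - Id \<longrightarrow> (c, b) \<in> W))
      then succ_stage (h (THE b. (b, a) \<in> W - Id \<and> (\<forall>c. (c, a) \<in> W - Id \<longrightarrow> (c, b) \<in> W)))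
      else limit_stage {b. (b, a) \<in> W - Id} h)"

definition hier :: "'v::lattice set \<Rightarrow> ('v \<Rightarrow> 'e::ordered_ab_group_add) \<Rightarrow> 'i rel \<Rightarrow> 'i \<Rightarrow> ('v, 'e) stage" where
  "hier L phi W = wfrec (W - Id) (hier_F L phi W)"

abbreviation omega1 :: "nat set rel" where "omega1 \<equiv> cardSuc natLeq"

text \<open>Stage aleph_1 (a limit): union over all countable ordinals.\<close>
definition hier_aleph1 :: "'v::lattice set \<Rightarrow> ('v \<Rightarrow> 'e::ordered_ab_group_add) \<Rightarrow> ('v, 'e) stage" where
  "hier_aleph1 L phi = limit_stage (Field omega1) (hier L phi omega1)"

definition collapsed_at_Pi :: "('v::lattice, 'e::ordered_ab_group_add) stage \<Rightarrow> bool" where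
  "collapsed_at_Pi s \<longleftrightarrow>
     pi_ext (succ_stage s) \<and> sigma_ext (succ_stage s) \<and>
     Pi_extendible (pi_set s) (pi_val s) \<and> Sigma_extendible (pi_set s) (pi_val s) \<and>
     PiSet (pi_set s) (pi_val s) = pi_set s \<and>
     (\<forall>x\<in>pi_set s. PiVal (pi_set s) (pi_val s) x = pi_val s x) \<and>
     SigmaSet (pi_set s) (pi_val s) = pi_set s \<and>
     (\<forall>x\<in>pi_set s. SigmaVal (pi_set s) (pi_val s) x = pi_val s x)"

end

theory Submission
  imports Defs
begin

(* Along the hierarchy every stage extends all earlier ones, and beyond that Pi_alpha and
   Sigma_alpha both extend Pi_beta and Sigma_beta for beta < alpha; consequently the Pi- and
   Sigma-parts coincide at stage 0 and at limit stages.  Stage aleph_1 is the union of the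
   countable stages.  A sequence in Pi_aleph1 L already lies in one countable stage Pi_beta L,
   because aleph_1 is regular; its meet is then evaluated in Pi_(beta+2) = Pi(Sigma_(beta+1)) and
   its join in Sigma_(beta+1), both again countable stages.  So the valuation Pi_aleph1 phi is
   closed under both extensions, i.e. it is its own Pi- and Sigma-extension. *)

unbundle cardinal_syntax

subsection \<open>Extensions of partial valuations\<close>

definition extends_to :: "'v set \<Rightarrow> ('v \<Rightarrow> 'e) \<Rightarrow> 'v set \<Rightarrow> ('v \<Rightarrow> 'e) \<Rightarrow> bool" where
  "extends_to K f K' f' \<longleftrightarrow> K \<subseteq> K' \<and> (\<forall>x\<in>K. f x = f' x)"

lemma extends_to_refl [simp]: "extends_to K f K f"
  by (simp add: extends_to_def)

lemma extends_to_trans: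
  "extends_to K f K' f' \<Longrightarrow> extends_to K' f' K'' f'' \<Longrightarrow> extends_to K f K'' f''"
  by (auto simp: extends_to_def)

lemma valuation_cong: "valuation K f \<Longrightarrow> (\<And>x. x \<in> K \<Longrightarrow> f x = g x) \<Longrightarrow> valuation K g"
  unfolding valuation_def sublattice_def by (metis (no_types, lifting))

lemma valuation_extends_to:
  assumes "valuation K f" "extends_to K f K' f'" "x \<in> K" "y \<in> K"
  shows "inf x y \<in> K'" "sup x y \<in> K'" "x \<le> y \<Longrightarrow> f' x \<le> f' y"
    and "f' (inf x y) + f' (sup x y) = f' x + f' y"
  using assms unfolding valuation_def sublattice_def extends_to_def by (auto simp del: inf.bounded_iff)

subsection \<open>Gluing a chain of partial valuations\<close>

definition glue :: "'b set \<Rightarrow> ('b \<Rightarrow> 'v set) \<Rightarrow> ('b \<Rightarrow> 'v \<Rightarrow> 'e) \<Rightarrow> 'v \<Rightarrow> 'e" where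
  "glue S K f x = f (SOME b. b \<in> S \<and> x \<in> K b) x"

definition extends_chain :: "'b set \<Rightarrow> ('b \<Rightarrow> 'v set) \<Rightarrow> ('b \<Rightarrow> 'v \<Rightarrow> 'e) \<Rightarrow> bool" where
  "extends_chain S K f \<longleftrightarrow>
     (\<forall>b\<in>S. \<forall>c\<in>S. extends_to (K b) (f b) (K c) (f c) \<or> extends_to (K c) (f c) (K b) (f b))"

lemma glue_obtain:
  assumes "x \<in> (\<Union>b\<in>S. K b)"
  obtains b where "b \<in> S" "x \<in> K b" "glue S K f x = f b x"
proof -
  let ?b = "SOME b. b \<in> S \<and> x \<in> K b"
  have "?b \<in> S \<and> x \<in> K ?b"
    by (rule someI_ex) (use assms in blast)
  then show thesis
    by (intro that[of ?b]) (simp_all add: glue_def)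
qed

lemma extends_to_glue:
  assumes "extends_chain S K f" "b \<in> S"
  shows "extends_to (K b) (f b) (\<Union>c\<in>S. K c) (glue S K f)"
  unfolding extends_to_def
proof (intro conjI ballI)
  show "K b \<subseteq> (\<Union>c\<in>S. K c)"
    using assms(2) by blast
  fix x assume x: "x \<in> K b"
  then have "x \<in> (\<Union>c\<in>S. K c)"
    using assms(2) by blast
  then obtain c where "c \<in> S" "x \<in> K c" "glue S K f x = f c x"
    by (rule glue_obtain)
  then show "f b x = glue S K f x"
    using assms x unfolding extends_chain_def extends_to_def by metis
qed

lemma glue_extends_to:
  assumes "\<And>b. b \<in> S \<Longrightarrow> extends_to (K b) (f b) K' f'"
  shows "extends_to (\<Union>b\<in>S. K b) (glue S K f) K' f'"
  unfolding extends_to_def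
proof (intro conjI ballI)
  show "(\<Union>b\<in>S. K b) \<subseteq> K'"
    using assms unfolding extends_to_def by blast
  fix x assume "x \<in> (\<Union>b\<in>S. K b)"
  then obtain b where "b \<in> S" "x \<in> K b" "glue S K f x = f b x"
    by (elim glue_obtain)
  then show "glue S K f x = f' x"
    using assms unfolding extends_to_def by metis
qed

lemma valuation_glue:
  assumes chain: "extends_chain S K f" and val: "\<And>b. b \<in> S \<Longrightarrow> valuation (K b) (f b)"
  shows "valuation (\<Union>b\<in>S. K b) (glue S K f)"
  unfolding valuation_def sublattice_def
proof (intro conjI ballI impI)
  fix x y assume "x \<in> (\<Union>b\<in>S. K b)" "y \<in> (\<Union>b\<in>S. K b)"
  then obtain d where d: "d \<in> S" "x \<in> K d" "y \<in> K d"
    using chain unfolding extends_chain_def extends_to_def by blast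
  note local = valuation_extends_to[OF val[OF d(1)] extends_to_glue[OF chain d(1)] d(2,3)]
  show "inf x y \<in> (\<Union>b\<in>S. K b)" "sup x y \<in> (\<Union>b\<in>S. K b)"
    by (fact local(1), fact local(2))
  show "glue S K f (inf x y) + glue S K f (sup x y) = glue S K f x + glue S K f y"
    by (fact local(4))
  assume "x \<le> y"
  then show "glue S K f x \<le> glue S K f y"
    by (fact local(3))
qed

subsection \<open>Pi-extensions\<close>

lemma is_inf_const: "is_inf (range (\<lambda>n::nat. c)) c"
  by (auto simp: is_inf_def)

lemma conv_dec_const: "c \<in> K \<Longrightarrow> conv_dec K f (\<lambda>n. c)"
  unfolding conv_dec_def using is_inf_const[of c] is_inf_const[of "f c"] by (auto simp: antimono_def)

lemma conv_dec_transfer: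
  assumes "conv_dec K f a" "\<And>n. a n \<in> K' \<and> f' (a n) = f (a n)"
  shows "conv_dec K' f' a"
  using assms unfolding conv_dec_def by simp

lemma PiSet_supset: "K \<subseteq> PiSet K f"
  unfolding PiSet_def using conv_dec_const is_inf_const by blast

lemma PiVal_eqI:
  assumes "conv_dec K f a" "is_inf (range a) x" "is_inf (range (\<lambda>n. f (a n))) y"
    and "\<And>b z. conv_dec K f b \<Longrightarrow> is_inf (range b) x \<Longrightarrow> is_inf (range (\<lambda>n. f (b n))) z \<Longrightarrow> z = y"
  shows "PiVal K f x = y"
  unfolding PiVal_def using assms by (intro the_equality) blast+

lemma PiVal_eq:
  assumes "Pi_extendible K f" "conv_dec K f a" "is_inf (range a) x" "is_inf (range (\<lambda>n. f (a n))) y"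
  shows "PiVal K f x = y"
proof -
  obtain g where "\<forall>a x y. conv_dec K f a \<and> is_inf (range a) x \<and> is_inf (range (\<lambda>n. f (a n))) y \<longrightarrow> g x = y"
    using assms(1) unfolding Pi_extendible_def by blast
  then show ?thesis
    using assms(2-4) by (intro PiVal_eqI) blast+
qed

lemma conv_dec_in_PiSet:
  assumes "Pi_extendible K' f'" "conv_dec K f a" "\<And>n. a n \<in> K' \<and> f' (a n) = f (a n)"
    and "is_inf (range a) x" "is_inf (range (\<lambda>n. f (a n))) y"
  shows "x \<in> PiSet K' f'" "PiVal K' f' x = y"
proof -
  have a: "conv_dec K' f' a"
    using assms(2,3) by (rule conv_dec_transfer)
  have vals: "(\<lambda>n. f' (a n)) = (\<lambda>n. f (a n))"
    using assms(3) by simp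
  have y: "is_inf (range (\<lambda>n. f' (a n))) y"
    unfolding vals by (rule assms(5))
  show "x \<in> PiSet K' f'"
    using a assms(4) unfolding PiSet_def by blast
  show "PiVal K' f' x = y"
    using assms(1) a assms(4) y by (rule PiVal_eq)
qed

lemma Pi_valuation:
  assumes "Pi_extendible K f"
  shows "valuation (PiSet K f) (PiVal K f)"
proof -
  obtain g where g: "valuation (PiSet K f) g"
    "\<forall>a x y. conv_dec K f a \<and> is_inf (range a) x \<and> is_inf (range (\<lambda>n. f (a n))) y \<longrightarrow> g x = y"
    using assms unfolding Pi_extendible_def by blast
  have "g x = PiVal K f x" if x: "x \<in> PiSet K f" for x
  proof -
    obtain a where a: "conv_dec K f a" "is_inf (range a) x"
      using x unfolding PiSet_def by blast
    then obtain y where "is_inf (range (\<lambda>n. f (a n))) y"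
      unfolding conv_dec_def by blast
    with a show ?thesis
      using g(2) PiVal_eq[OF assms a] by blast
  qed
  then show ?thesis
    by (rule valuation_cong[OF g(1)])
qed

lemma extends_to_PiVal:
  assumes "Pi_extendible K f"
  shows "extends_to K f (PiSet K f) (PiVal K f)"
  unfolding extends_to_def
  using PiSet_supset PiVal_eq[OF assms conv_dec_const is_inf_const is_inf_const] by auto

lemma PiVal_mono:
  assumes "extends_to K f K' f'" "Pi_extendible K' f'"
  shows "extends_to (PiSet K f) (PiVal K f) (PiSet K' f') (PiVal K' f')"
  unfolding extends_to_def
proof (intro conjI ballI subsetI)
  fix x assume "x \<in> PiSet K f"
  then obtain a where a: "conv_dec K f a" "is_inf (range a) x"
    unfolding PiSet_def by blast
  then obtain y where y: "is_inf (range (\<lambda>n. f (a n))) y"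
    unfolding conv_dec_def by blast
  have agree: "a n \<in> K' \<and> f' (a n) = f (a n)" if "conv_dec K f a" for a n
    using that assms(1) unfolding extends_to_def conv_dec_def by auto
  show "x \<in> PiSet K' f'"
    using conv_dec_in_PiSet(1)[OF assms(2) a(1) agree[OF a(1)] a(2) y] .
  have "PiVal K f x = y"
  proof (rule PiVal_eqI[OF a y])
    fix b z assume b: "conv_dec K f b" "is_inf (range b) x" "is_inf (range (\<lambda>n. f (b n))) z"
    show "z = y"
      using conv_dec_in_PiSet(2)[OF assms(2) b(1) agree[OF b(1)] b(2,3)]
        conv_dec_in_PiSet(2)[OF assms(2) a(1) agree[OF a(1)] a(2) y]
      by simp
  qed
  then show "PiVal K f x = PiVal K' f' x"
    using conv_dec_in_PiSet(2)[OF assms(2) a(1) agree[OF a(1)] a(2) y] by simp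
qed

lemma Pi_extendible_cong:
  assumes "Pi_extendible K f" "\<And>x. x \<in> K \<Longrightarrow> f x = g x"
  shows "Pi_extendible K g"
proof -
  have conv: "conv_dec K g a \<longleftrightarrow> conv_dec K f a" for a
    using assms(2) conv_dec_transfer unfolding conv_dec_def by metis
  have vals: "(\<lambda>n. g (a n)) = (\<lambda>n. f (a n))" if "conv_dec K f a" for a
    using that assms(2) unfolding conv_dec_def by simp
  obtain h where h: "valuation (PiSet K f) h"
    "\<forall>a x y. conv_dec K f a \<and> is_inf (range a) x \<and> is_inf (range (\<lambda>n. f (a n))) y \<longrightarrow> h x = y"
    using assms(1) unfolding Pi_extendible_def by blast
  have "PiSet K g = PiSet K f"
    unfolding PiSet_def conv ..
  moreover have "h x = y"
    if "conv_dec K g a" "is_inf (range a) x" "is_inf (range (\<lambda>n. g (a n))) y" for a x y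
    using that h(2) vals unfolding conv by metis
  ultimately show ?thesis
    unfolding Pi_extendible_def using h(1) by auto
qed

lemma Pi_extendible_closed:
  assumes "valuation K f"
    and closed: "\<And>a x y. conv_dec K f a \<Longrightarrow> is_inf (range a) x \<Longrightarrow> is_inf (range (\<lambda>n. f (a n))) y \<Longrightarrow>
      x \<in> K \<and> f x = y"
  shows "PiSet K f = K" "Pi_extendible K f"
proof -
  show PiSet: "PiSet K f = K"
  proof (rule antisym[OF subsetI PiSet_supset])
    fix x assume "x \<in> PiSet K f"
    then obtain a where a: "conv_dec K f a" "is_inf (range a) x"
      unfolding PiSet_def by blast
    then obtain y where "is_inf (range (\<lambda>n. f (a n))) y"
      unfolding conv_dec_def by blast
    with a show "x \<in> K"
      using closed by blast
  qed
  show "Pi_extendible K f"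
    unfolding Pi_extendible_def PiSet using assms by blast
qed

subsection \<open>Sigma-extensions\<close>

lemma is_sup_const: "is_sup (range (\<lambda>n::nat. c)) c"
  by (auto simp: is_sup_def)

lemma conv_inc_const: "c \<in> K \<Longrightarrow> conv_inc K f (\<lambda>n. c)"
  unfolding conv_inc_def using is_sup_const[of c] is_sup_const[of "f c"] by (auto simp: mono_def)

lemma conv_inc_transfer:
  assumes "conv_inc K f a" "\<And>n. a n \<in> K' \<and> f' (a n) = f (a n)"
  shows "conv_inc K' f' a"
  using assms unfolding conv_inc_def by simp

lemma SigmaSet_supset: "K \<subseteq> SigmaSet K f"
  unfolding SigmaSet_def using conv_inc_const is_sup_const by blast

lemma SigmaVal_eqI:
  assumes "conv_inc K f a" "is_sup (range a) x" "is_sup (range (\<lambda>n. f (a n))) y"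
    and "\<And>b z. conv_inc K f b \<Longrightarrow> is_sup (range b) x \<Longrightarrow> is_sup (range (\<lambda>n. f (b n))) z \<Longrightarrow> z = y"
  shows "SigmaVal K f x = y"
  unfolding SigmaVal_def using assms by (intro the_equality) blast+

lemma SigmaVal_eq:
  assumes "Sigma_extendible K f" "conv_inc K f a" "is_sup (range a) x" "is_sup (range (\<lambda>n. f (a n))) y"
  shows "SigmaVal K f x = y"
proof -
  obtain g where "\<forall>a x y. conv_inc K f a \<and> is_sup (range a) x \<and> is_sup (range (\<lambda>n. f (a n))) y \<longrightarrow> g x = y"
    using assms(1) unfolding Sigma_extendible_def by blast
  then show ?thesis
    using assms(2-4) by (intro SigmaVal_eqI) blast+
qed

lemma conv_inc_in_SigmaSet:
  assumes "Sigma_extendible K' f'" "conv_inc K f a" "\<And>n. a n \<in> K' \<and> f' (a n) = f (a n)"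
    and "is_sup (range a) x" "is_sup (range (\<lambda>n. f (a n))) y"
  shows "x \<in> SigmaSet K' f'" "SigmaVal K' f' x = y"
proof -
  have a: "conv_inc K' f' a"
    using assms(2,3) by (rule conv_inc_transfer)
  have vals: "(\<lambda>n. f' (a n)) = (\<lambda>n. f (a n))"
    using assms(3) by simp
  have y: "is_sup (range (\<lambda>n. f' (a n))) y"
    unfolding vals by (rule assms(5))
  show "x \<in> SigmaSet K' f'"
    using a assms(4) unfolding SigmaSet_def by blast
  show "SigmaVal K' f' x = y"
    using assms(1) a assms(4) y by (rule SigmaVal_eq)
qed

lemma Sigma_valuation:
  assumes "Sigma_extendible K f"
  shows "valuation (SigmaSet K f) (SigmaVal K f)"
proof -
  obtain g where g: "valuation (SigmaSet K f) g"
    "\<forall>a x y. conv_inc K f a \<and> is_sup (range a) x \<and> is_sup (range (\<lambda>n. f (a n))) y \<longrightarrow> g x = y"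
    using assms unfolding Sigma_extendible_def by blast
  have "g x = SigmaVal K f x" if x: "x \<in> SigmaSet K f" for x
  proof -
    obtain a where a: "conv_inc K f a" "is_sup (range a) x"
      using x unfolding SigmaSet_def by blast
    then obtain y where "is_sup (range (\<lambda>n. f (a n))) y"
      unfolding conv_inc_def by blast
    with a show ?thesis
      using g(2) SigmaVal_eq[OF assms a] by blast
  qed
  then show ?thesis
    by (rule valuation_cong[OF g(1)])
qed

lemma extends_to_SigmaVal:
  assumes "Sigma_extendible K f"
  shows "extends_to K f (SigmaSet K f) (SigmaVal K f)"
  unfolding extends_to_def
  using SigmaSet_supset SigmaVal_eq[OF assms conv_inc_const is_sup_const is_sup_const] by auto

lemma SigmaVal_mono:
  assumes "extends_to K f K' f'" "Sigma_extendible K' f'"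
  shows "extends_to (SigmaSet K f) (SigmaVal K f) (SigmaSet K' f') (SigmaVal K' f')"
  unfolding extends_to_def
proof (intro conjI ballI subsetI)
  fix x assume "x \<in> SigmaSet K f"
  then obtain a where a: "conv_inc K f a" "is_sup (range a) x"
    unfolding SigmaSet_def by blast
  then obtain y where y: "is_sup (range (\<lambda>n. f (a n))) y"
    unfolding conv_inc_def by blast
  have agree: "a n \<in> K' \<and> f' (a n) = f (a n)" if "conv_inc K f a" for a n
    using that assms(1) unfolding extends_to_def conv_inc_def by auto
  show "x \<in> SigmaSet K' f'"
    using conv_inc_in_SigmaSet(1)[OF assms(2) a(1) agree[OF a(1)] a(2) y] .
  have "SigmaVal K f x = y"
  proof (rule SigmaVal_eqI[OF a y])
    fix b z assume b: "conv_inc K f b" "is_sup (range b) x" "is_sup (range (\<lambda>n. f (b n))) z"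
    show "z = y"
      using conv_inc_in_SigmaSet(2)[OF assms(2) b(1) agree[OF b(1)] b(2,3)]
        conv_inc_in_SigmaSet(2)[OF assms(2) a(1) agree[OF a(1)] a(2) y]
      by simp
  qed
  then show "SigmaVal K f x = SigmaVal K' f' x"
    using conv_inc_in_SigmaSet(2)[OF assms(2) a(1) agree[OF a(1)] a(2) y] by simp
qed

lemma Sigma_extendible_closed:
  assumes "valuation K f"
    and closed: "\<And>a x y. conv_inc K f a \<Longrightarrow> is_sup (range a) x \<Longrightarrow> is_sup (range (\<lambda>n. f (a n))) y \<Longrightarrow>
      x \<in> K \<and> f x = y"
  shows "SigmaSet K f = K" "Sigma_extendible K f"
proof -
  show SigmaSet: "SigmaSet K f = K"
  proof (rule antisym[OF subsetI SigmaSet_supset])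
    fix x assume "x \<in> SigmaSet K f"
    then obtain a where a: "conv_inc K f a" "is_sup (range a) x"
      unfolding SigmaSet_def by blast
    then obtain y where "is_sup (range (\<lambda>n. f (a n))) y"
      unfolding conv_inc_def by blast
    with a show "x \<in> K"
      using closed by blast
  qed
  show "Sigma_extendible K f"
    unfolding Sigma_extendible_def SigmaSet using assms by blast
qed

lemma succ_stage_simps [simp]:
  "pi_ext (succ_stage s) = (sigma_ext s \<and> Pi_extendible (sigma_set s) (sigma_val s))"
  "sigma_ext (succ_stage s) = (pi_ext s \<and> Sigma_extendible (pi_set s) (pi_val s))"
  "pi_set (succ_stage s) = PiSet (sigma_set s) (sigma_val s)"
  "pi_val (succ_stage s) = PiVal (sigma_set s) (sigma_val s)"
  "sigma_set (succ_stage s) = SigmaSet (pi_set s) (pi_val s)"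
  "sigma_val (succ_stage s) = SigmaVal (pi_set s) (pi_val s)"
  by (simp_all add: succ_stage_def pi_ext_def sigma_ext_def pi_set_def pi_val_def sigma_set_def sigma_val_def)

lemma limit_stage_simps:
  "pi_ext (limit_stage S h) = (\<forall>b\<in>S. pi_ext (h b))"
  "sigma_ext (limit_stage S h) = (\<forall>b\<in>S. sigma_ext (h b))"
  "pi_set (limit_stage S h) = (\<Union>b\<in>S. pi_set (h b))"
  "pi_val (limit_stage S h) = glue S (\<lambda>b. pi_set (h b)) (\<lambda>b. pi_val (h b))"
  "sigma_set (limit_stage S h) = (\<Union>b\<in>S. sigma_set (h b))"
  "sigma_val (limit_stage S h) = glue S (\<lambda>b. sigma_set (h b)) (\<lambda>b. sigma_val (h b))"
  by (simp_all add: limit_stage_def pi_ext_def sigma_ext_def pi_set_def pi_val_def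
      sigma_set_def sigma_val_def glue_def fun_eq_iff)

subsection \<open>The hierarchy along a well-order\<close>

locale valuation_hierarchy = wo_rel W for W :: "'i rel" +
  fixes L :: "'v::lattice set" and phi :: "'v \<Rightarrow> 'e::ordered_ab_group_add"
begin

(* (PS a, PV a) is (Pi_a L, Pi_a phi) and (SS a, SV a) is (Sigma_a L, Sigma_a phi). *)
abbreviation H :: "'i \<Rightarrow> ('v, 'e) stage" where "H \<equiv> hier L phi W"
abbreviation PS :: "'i \<Rightarrow> 'v set" where "PS a \<equiv> pi_set (H a)"
abbreviation PV :: "'i \<Rightarrow> 'v \<Rightarrow> 'e" where "PV a \<equiv> pi_val (H a)"
abbreviation SS :: "'i \<Rightarrow> 'v set" where "SS a \<equiv> sigma_set (H a)"
abbreviation SV :: "'i \<Rightarrow> 'v \<Rightarrow> 'e" where "SV a \<equiv> sigma_val (H a)"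

definition is_zero :: "'i \<Rightarrow> bool" where
  "is_zero a \<longleftrightarrow> (\<forall>b\<in>Field W. (a, b) \<in> W)"

definition is_succ :: "'i \<Rightarrow> 'i \<Rightarrow> bool" where
  "is_succ a b \<longleftrightarrow> (b, a) \<in> W - Id \<and> (\<forall>c. (c, a) \<in> W - Id \<longrightarrow> (c, b) \<in> W)"

lemma mem_underS_iff: "c \<in> underS a \<longleftrightarrow> (c, a) \<in> W - Id"
  by (auto simp: underS_def)

lemma mem_under_iff: "c \<in> under a \<longleftrightarrow> (c, a) \<in> W"
  by (simp add: under_def)

lemma mem_under_cases: "c \<in> under a \<Longrightarrow> c = a \<or> c \<in> underS a"
  by (auto simp: under_def underS_def)

lemma underS_eq: "{b. (b, a) \<in> W - Id} = underS a"
  by (auto simp: underS_def)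

lemma is_succ_unique: "is_succ a b \<Longrightarrow> is_succ a b' \<Longrightarrow> b' = b"
  using ANTISYM unfolding is_succ_def antisym_def by blast

lemma hier_unfold:
  "H a = (if is_zero a then (True, (L, phi), True, (L, phi))
     else if \<exists>b. is_succ a b then succ_stage (cut H (W - Id) a (THE b. is_succ a b))
     else limit_stage (underS a) (cut H (W - Id) a))"
proof -
  have "H a = hier_F L phi W (cut H (W - Id) a) a"
    unfolding hier_def by (rule wfrec[OF WF])
  then show ?thesis
    unfolding hier_F_def is_zero_def[symmetric] is_succ_def[symmetric] underS_eq .
qed

lemma hier_zero: "is_zero a \<Longrightarrow> H a = (True, (L, phi), True, (L, phi))"
  by (subst hier_unfold) simp

lemma hier_succ:
  assumes "is_succ a b"
  shows "H a = succ_stage (H b)"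
proof -
  have ba: "(b, a) \<in> W - Id"
    using assms by (simp add: is_succ_def)
  then have "\<not> is_zero a"
    using ANTISYM FieldI1[of b a W] unfolding is_zero_def antisym_def by blast
  moreover have "(THE b. is_succ a b) = b"
    using assms is_succ_unique by blast
  ultimately show ?thesis
    using assms by (subst hier_unfold) (auto simp: cut_apply[OF ba])
qed

lemma hier_limit:
  "\<not> is_zero a \<Longrightarrow> \<forall>b. \<not> is_succ a b \<Longrightarrow> H a = limit_stage (underS a) (cut H (W - Id) a)"
  by (subst hier_unfold) auto

lemma succ_exists:
  assumes "(b, a) \<in> W - Id"
  shows "\<exists>m. is_succ m b \<and> (m, a) \<in> W"
proof -
  let ?A = "{m. (b, m) \<in> W - Id}"
  obtain m where m: "m \<in> ?A" and least: "\<And>c. (c, m) \<in> W - Id \<Longrightarrow> c \<notin> ?A"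
    using wfE_min[OF WF, of a ?A] assms by blast
  have fields: "b \<in> Field W" "a \<in> Field W" "m \<in> Field W"
    using assms m by (auto intro: FieldI1 FieldI2)
  have refl: "c \<in> Field W \<Longrightarrow> (c, c) \<in> W" for c
    using REFL by (simp add: refl_on_def)
  have "(m, a) \<in> W"
  proof (cases "m = a")
    case False
    then show ?thesis
      using TOTALS fields(2,3) least[of a] assms by blast
  qed (use refl fields in simp)
  moreover have "(c, b) \<in> W" if c: "(c, m) \<in> W - Id" for c
  proof (cases "c = b")
    case False
    have "c \<in> Field W"
      using c by (auto intro: FieldI1)
    then show ?thesis
      using TOTALS fields(1) least[OF c] False by blast
  qed (use refl fields in simp)
  ultimately show ?thesis
    using m unfolding is_succ_def by blast
qed

lemma limit_unbounded:
  assumes "\<forall>d. \<not> is_succ a d" "b \<in> underS a"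
  shows "\<exists>c\<in>underS a. (b, c) \<in> W - Id"
proof -
  obtain m where m: "is_succ m b" "(m, a) \<in> W"
    using succ_exists[of b a] assms(2) unfolding mem_underS_iff by blast
  have "m \<noteq> a"
    using assms(1) m(1) by blast
  then have "m \<in> underS a"
    using m(2) unfolding mem_underS_iff by simp
  moreover have "(b, m) \<in> W - Id"
    using m(1) unfolding is_succ_def by simp
  ultimately show ?thesis
    by blast
qed

lemma sigma_ext_if_pi_ext:
  assumes no_max: "\<And>a. a \<in> Field W \<Longrightarrow> \<exists>b. (a, b) \<in> W - Id"
    and pi: "\<And>b. b \<in> Field W \<Longrightarrow> pi_ext (H b)" and b: "b \<in> Field W"
  shows "sigma_ext (H b)"
proof -
  obtain c where "(b, c) \<in> W - Id"
    using no_max[OF b] by blast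
  then obtain m where m: "is_succ m b"
    using succ_exists by blast
  then have "m \<in> Field W"
    unfolding is_succ_def by (auto intro: FieldI2)
  then have "pi_ext (succ_stage (H b))"
    using pi unfolding hier_succ[OF m, symmetric] by blast
  then show ?thesis
    by simp
qed

end

locale extendible_hierarchy = valuation_hierarchy W L phi
  for W :: "'i rel" and L :: "'v::lattice set" and phi :: "'v \<Rightarrow> 'e::ordered_ab_group_add" +
  assumes valuation_L: "valuation L phi"
    and extendible: "\<And>b. b \<in> Field W \<Longrightarrow> pi_ext (H b) \<and> sigma_ext (H b)"
begin

definition coherent :: "'i \<Rightarrow> bool" where
  "coherent a \<longleftrightarrow> valuation (PS a) (PV a) \<and> valuation (SS a) (SV a) \<and>
     (\<forall>c\<in>under a. extends_to (PS c) (PV c) (PS a) (PV a) \<and> extends_to (SS c) (SV c) (SS a) (SV a)) \<and>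
     (\<forall>c\<in>underS a. extends_to (PS c) (PV c) (SS a) (SV a) \<and> extends_to (SS c) (SV c) (PS a) (PV a))"

(* h need only agree with H on S: the recursion builds a limit stage from cut H (W - Id) a. *)
lemma limit_stage_coherent:
  assumes S: "S \<subseteq> Field W" and agree: "\<And>b. b \<in> S \<Longrightarrow> h b = H b"
    and coh: "\<And>b. b \<in> S \<Longrightarrow> coherent b"
    and unbounded: "\<And>b. b \<in> S \<Longrightarrow> \<exists>c\<in>S. (b, c) \<in> W - Id"
  defines "s \<equiv> limit_stage S h"
  shows "valuation (pi_set s) (pi_val s)" "valuation (sigma_set s) (sigma_val s)"
    and "b \<in> S \<Longrightarrow> extends_to (PS b) (PV b) (pi_set s) (pi_val s)"
    and "b \<in> S \<Longrightarrow> extends_to (SS b) (SV b) (sigma_set s) (sigma_val s)"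
    and "extends_to (pi_set s) (pi_val s) (sigma_set s) (sigma_val s)"
    and "extends_to (sigma_set s) (sigma_val s) (pi_set s) (pi_val s)"
proof -
  have mono: "extends_to (PS b) (PV b) (PS c) (PV c) \<and> extends_to (SS b) (SV b) (SS c) (SV c)"
    if "b \<in> S" "c \<in> S" "(b, c) \<in> W" for b c
  proof -
    have "b \<in> under c"
      using that(3) by (simp add: mem_under_iff)
    then show ?thesis
      using coh[OF that(2)] unfolding coherent_def by blast
  qed
  have chains: "extends_chain S (\<lambda>b. pi_set (h b)) (\<lambda>b. pi_val (h b))"
    "extends_chain S (\<lambda>b. sigma_set (h b)) (\<lambda>b. sigma_val (h b))"
    unfolding extends_chain_def using TOTALS S mono agree by (metis subsetD)+
  have vals: "valuation (PS b) (PV b)" "valuation (SS b) (SV b)" if "b \<in> S" for b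
    using coh[OF that] unfolding coherent_def by blast+
  have pi_s: "pi_set s = (\<Union>b\<in>S. pi_set (h b))"
      "pi_val s = glue S (\<lambda>b. pi_set (h b)) (\<lambda>b. pi_val (h b))"
    and sigma_s: "sigma_set s = (\<Union>b\<in>S. sigma_set (h b))"
      "sigma_val s = glue S (\<lambda>b. sigma_set (h b)) (\<lambda>b. sigma_val (h b))"
    by (simp_all add: s_def limit_stage_simps)
  show "valuation (pi_set s) (pi_val s)"
    unfolding pi_s by (rule valuation_glue[OF chains(1)]) (simp add: agree vals)
  show "valuation (sigma_set s) (sigma_val s)"
    unfolding sigma_s by (rule valuation_glue[OF chains(2)]) (simp add: agree vals)
  show pi_up: "extends_to (PS b) (PV b) (pi_set s) (pi_val s)" if "b \<in> S" for b
    using extends_to_glue[OF chains(1) that] agree[OF that] unfolding pi_s by simp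
  show sigma_up: "extends_to (SS b) (SV b) (sigma_set s) (sigma_val s)" if "b \<in> S" for b
    using extends_to_glue[OF chains(2) that] agree[OF that] unfolding sigma_s by simp
  have cross: "extends_to (PS b) (PV b) (sigma_set s) (sigma_val s) \<and>
      extends_to (SS b) (SV b) (pi_set s) (pi_val s)" if b: "b \<in> S" for b
  proof -
    obtain c where c: "c \<in> S" "(b, c) \<in> W - Id"
      using unbounded[OF b] by blast
    then have "b \<in> underS c"
      by (simp add: mem_underS_iff)
    then have "extends_to (PS b) (PV b) (SS c) (SV c)" "extends_to (SS b) (SV b) (PS c) (PV c)"
      using coh[OF c(1)] unfolding coherent_def by blast+
    then show ?thesis
      using pi_up[OF c(1)] sigma_up[OF c(1)] extends_to_trans by blast
  qed
  show "extends_to (pi_set s) (pi_val s) (sigma_set s) (sigma_val s)"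
    unfolding pi_s by (rule glue_extends_to) (simp add: agree cross)
  show "extends_to (sigma_set s) (sigma_val s) (pi_set s) (pi_val s)"
    unfolding sigma_s by (rule glue_extends_to) (simp add: agree cross)
qed

lemma limit_coherent:
  assumes "\<not> is_zero a" "\<forall>d. \<not> is_succ a d" and coh: "\<And>c. c \<in> underS a \<Longrightarrow> coherent c"
  shows "valuation (PS a) (PV a)" "valuation (SS a) (SV a)"
    and "c \<in> underS a \<Longrightarrow> extends_to (PS c) (PV c) (PS a) (PV a)"
    and "c \<in> underS a \<Longrightarrow> extends_to (SS c) (SV c) (SS a) (SV a)"
    and "extends_to (PS a) (PV a) (SS a) (SV a)" "extends_to (SS a) (SV a) (PS a) (PV a)"
proof -
  have "underS a \<subseteq> Field W" "\<And>b. b \<in> underS a \<Longrightarrow> cut H (W - Id) a b = H b"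
    by (auto simp: underS_def cut_apply intro: FieldI1)
  note limit = limit_stage_coherent[OF this coh limit_unbounded[OF assms(2)],
      folded hier_limit[OF assms(1,2)]]
  show "valuation (PS a) (PV a)" "valuation (SS a) (SV a)"
    "extends_to (PS a) (PV a) (SS a) (SV a)" "extends_to (SS a) (SV a) (PS a) (PV a)"
    using limit by blast+
  show "c \<in> underS a \<Longrightarrow> extends_to (PS c) (PV c) (PS a) (PV a)"
    "c \<in> underS a \<Longrightarrow> extends_to (SS c) (SV c) (SS a) (SV a)"
    using limit by blast+
qed

lemma coherent_zero:
  assumes "is_zero a" "a \<in> Field W"
  shows "coherent a"
proof -
  have "c = a" if "(c, a) \<in> W" for c
    using assms ANTISYM FieldI1[OF that] that unfolding is_zero_def antisym_def by blast
  then have "under a = {a}" "underS a = {}"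
    using assms(2) REFL by (auto simp: under_def underS_def refl_on_def)
  then show ?thesis
    unfolding coherent_def using hier_zero[OF assms(1)] valuation_L
    by (simp add: pi_set_def pi_val_def sigma_set_def sigma_val_def)
qed

lemma pi_sigma_agree:
  assumes "\<forall>d. \<not> is_succ a d" and coh: "\<And>c. c \<in> underS a \<Longrightarrow> coherent c"
  shows "extends_to (PS a) (PV a) (SS a) (SV a) \<and> extends_to (SS a) (SV a) (PS a) (PV a)"
proof (cases "is_zero a")
  case True
  then show ?thesis
    by (simp add: hier_zero pi_set_def pi_val_def sigma_set_def sigma_val_def)
next
  case False
  then show ?thesis
    using limit_coherent(5,6)[OF False assms] by blast
qed

lemma coherent_limit:
  assumes "\<not> is_zero a" "\<forall>d. \<not> is_succ a d" and coh: "\<And>c. c \<in> underS a \<Longrightarrow> coherent c"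
  shows "coherent a"
  unfolding coherent_def
proof (intro conjI ballI)
  note limit = limit_coherent[OF assms]
  show "valuation (PS a) (PV a)" "valuation (SS a) (SV a)"
    using limit by blast+
next
  fix c assume "c \<in> under a"
  then have "c = a \<or> c \<in> underS a"
    by (rule mem_under_cases)
  then show "extends_to (PS c) (PV c) (PS a) (PV a)" "extends_to (SS c) (SV c) (SS a) (SV a)"
    using limit_coherent(3,4)[OF assms] extends_to_refl by blast+
next
  fix c assume c: "c \<in> underS a"
  show "extends_to (PS c) (PV c) (SS a) (SV a)"
    using limit_coherent(3)[OF assms c] limit_coherent(5)[OF assms] by (rule extends_to_trans)
  show "extends_to (SS c) (SV c) (PS a) (PV a)"
    using limit_coherent(4)[OF assms c] limit_coherent(6)[OF assms] by (rule extends_to_trans)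
qed

lemma coherent_succ:
  assumes a: "a \<in> Field W" and d: "is_succ a d" and coh: "\<And>c. c \<in> under d \<Longrightarrow> coherent c"
  shows "coherent a"
proof -
  have Ha: "H a = succ_stage (H d)"
    using d by (rule hier_succ)
  have ext: "Pi_extendible (SS d) (SV d)" "Sigma_extendible (PS d) (PV d)"
    using extendible[OF a] unfolding Ha by simp_all
  have "d \<in> under d"
    using d REFL unfolding is_succ_def by (auto simp: under_def refl_on_def intro: FieldI1)
  then have coh_d: "coherent d"
    by (rule coh)
  have S_to_P: "extends_to (SS d) (SV d) (PS a) (PV a)"
    using extends_to_PiVal[OF ext(1)] unfolding Ha by simp
  have P_to_S: "extends_to (PS d) (PV d) (SS a) (SV a)"
    using extends_to_SigmaVal[OF ext(2)] unfolding Ha by simp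
  have step: "extends_to (PS d) (PV d) (PS a) (PV a) \<and> extends_to (SS d) (SV d) (SS a) (SV a)"
  proof (cases "\<exists>e. is_succ d e")
    case True
    then obtain e where e: "is_succ d e" ..
    then have "e \<in> under d"
      unfolding is_succ_def mem_under_iff by blast
    then have "extends_to (PS e) (PV e) (PS d) (PV d)" "extends_to (SS e) (SV e) (SS d) (SV d)"
      using coh_d unfolding coherent_def by blast+
    then show ?thesis
      using PiVal_mono[OF _ ext(1)] SigmaVal_mono[OF _ ext(2)] unfolding Ha hier_succ[OF e] by simp
  next
    case False
    have "coherent c" if "c \<in> underS d" for c
      using coh that by (auto simp: under_def underS_def)
    then have "extends_to (PS d) (PV d) (SS d) (SV d) \<and> extends_to (SS d) (SV d) (PS d) (PV d)"
      using pi_sigma_agree False by blast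
    then show ?thesis
      using S_to_P P_to_S extends_to_trans by blast
  qed
  have below: "extends_to (PS c) (PV c) (PS d) (PV d) \<and> extends_to (SS c) (SV c) (SS d) (SV d)"
    if "c \<in> underS a" for c
  proof -
    have "c \<in> under d"
      using d that unfolding is_succ_def mem_underS_iff mem_under_iff by blast
    then show ?thesis
      using coh_d unfolding coherent_def by blast
  qed
  show ?thesis
    unfolding coherent_def
  proof (intro conjI ballI)
    show "valuation (PS a) (PV a)" "valuation (SS a) (SV a)"
      using Pi_valuation[OF ext(1)] Sigma_valuation[OF ext(2)] unfolding Ha by simp_all
  next
    fix c assume "c \<in> under a"
    then have "c = a \<or> c \<in> underS a"
      by (rule mem_under_cases)
    then show "extends_to (PS c) (PV c) (PS a) (PV a)" "extends_to (SS c) (SV c) (SS a) (SV a)"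
      using below step extends_to_trans extends_to_refl by blast+
  next
    fix c assume "c \<in> underS a"
    then show "extends_to (PS c) (PV c) (SS a) (SV a)" "extends_to (SS c) (SV c) (PS a) (PV a)"
      using below S_to_P P_to_S extends_to_trans by blast+
  qed
qed

lemma coherent: "a \<in> Field W \<Longrightarrow> coherent a"
proof (induction a rule: wf_induct_rule[OF WF])
  case (1 a)
  have IH: "coherent c" if "c \<in> underS a" for c
    using 1 that by (auto simp: underS_def intro: FieldI1)
  consider (zero) "is_zero a" | (succ) d where "is_succ a d" | (limit) "\<not> is_zero a" "\<forall>d. \<not> is_succ a d"
    by blast
  then show ?case
  proof cases
    case zero
    then show ?thesis
      using coherent_zero "1.prems" by blast
  next
    case (succ d)
    have "c \<in> underS a" if "c \<in> under d" for c
      using that succ TRANS ANTISYM unfolding is_succ_def mem_underS_iff mem_under_iff trans_def antisym_def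
      by blast
    then show ?thesis
      using coherent_succ[OF "1.prems" succ] IH by blast
  next
    case limit
    then show ?thesis
      using coherent_limit IH by blast
  qed
qed

end

locale collapsing_hierarchy = extendible_hierarchy W L phi
  for W :: "'i rel" and L :: "'v::lattice set" and phi :: "'v \<Rightarrow> 'e::ordered_ab_group_add" +
  assumes no_max: "\<And>a. a \<in> Field W \<Longrightarrow> \<exists>b. (a, b) \<in> W - Id"
    and countably_bounded: "\<And>bs :: nat \<Rightarrow> 'i. (\<And>n. bs n \<in> Field W) \<Longrightarrow> \<exists>c\<in>Field W. \<forall>n. (bs n, c) \<in> W"
begin

abbreviation top_stage :: "('v, 'e) stage" where
  "top_stage \<equiv> limit_stage (Field W) H"

lemma next_stage:
  assumes "b \<in> Field W"
  obtains m where "m \<in> Field W" "b \<in> underS m" "H m = succ_stage (H b)"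
proof -
  obtain c where "(b, c) \<in> W - Id"
    using no_max[OF assms] by blast
  then obtain m where m: "is_succ m b"
    using succ_exists by blast
  then have "(b, m) \<in> W - Id"
    unfolding is_succ_def by blast
  then show thesis
    using that hier_succ[OF m] by (auto simp: mem_underS_iff intro: FieldI2)
qed

lemma top_stage_coherent:
  shows "valuation (pi_set top_stage) (pi_val top_stage)"
    and "b \<in> Field W \<Longrightarrow> extends_to (PS b) (PV b) (pi_set top_stage) (pi_val top_stage)"
    and "b \<in> Field W \<Longrightarrow> extends_to (SS b) (SV b) (sigma_set top_stage) (sigma_val top_stage)"
    and "extends_to (pi_set top_stage) (pi_val top_stage) (sigma_set top_stage) (sigma_val top_stage)"
    and "extends_to (sigma_set top_stage) (sigma_val top_stage) (pi_set top_stage) (pi_val top_stage)"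
proof -
  have "\<exists>c\<in>Field W. (b, c) \<in> W - Id" if "b \<in> Field W" for b
    using no_max[OF that] by (auto intro: FieldI2)
  note top = limit_stage_coherent[OF subset_refl refl coherent this]
  show "valuation (pi_set top_stage) (pi_val top_stage)"
    "extends_to (pi_set top_stage) (pi_val top_stage) (sigma_set top_stage) (sigma_val top_stage)"
    "extends_to (sigma_set top_stage) (sigma_val top_stage) (pi_set top_stage) (pi_val top_stage)"
    using top by blast+
  show "b \<in> Field W \<Longrightarrow> extends_to (PS b) (PV b) (pi_set top_stage) (pi_val top_stage)"
    "b \<in> Field W \<Longrightarrow> extends_to (SS b) (SV b) (sigma_set top_stage) (sigma_val top_stage)"
    using top by blast+
qed

lemma sequence_in_stage:
  fixes a :: "nat \<Rightarrow> 'v"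
  assumes "\<And>n. a n \<in> pi_set top_stage"
  obtains b where "b \<in> Field W" "\<And>n. a n \<in> PS b \<and> PV b (a n) = pi_val top_stage (a n)"
proof -
  have "\<forall>n. \<exists>b. b \<in> Field W \<and> a n \<in> PS b"
    using assms unfolding limit_stage_simps by blast
  then obtain bs where bs: "\<And>n. bs n \<in> Field W" "\<And>n. a n \<in> PS (bs n)"
    by metis
  obtain b where b: "b \<in> Field W" "\<And>n. bs n \<in> under b"
    using countably_bounded[of bs] bs(1) unfolding mem_under_iff by blast
  have "a n \<in> PS b" for n
    using coherent[OF b(1)] b(2) bs(2) unfolding coherent_def extends_to_def by blast
  moreover have "PV b (a n) = pi_val top_stage (a n)" if "a n \<in> PS b" for n
    using top_stage_coherent(2)[OF b(1)] that unfolding extends_to_def by blast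
  ultimately show thesis
    using that b(1) by blast
qed

lemma top_stage_Pi_closed:
  assumes "conv_dec (pi_set top_stage) (pi_val top_stage) a" "is_inf (range a) x"
    and "is_inf (range (\<lambda>n. pi_val top_stage (a n))) y"
  shows "x \<in> pi_set top_stage \<and> pi_val top_stage x = y"
proof -
  obtain b where b: "b \<in> Field W" "\<And>n. a n \<in> PS b \<and> PV b (a n) = pi_val top_stage (a n)"
    using assms(1) sequence_in_stage unfolding conv_dec_def by blast
  obtain m where m: "m \<in> Field W" "b \<in> underS m"
    using next_stage[OF b(1)] by blast
  obtain m' where m': "m' \<in> Field W" "H m' = succ_stage (H m)"
    using next_stage[OF m(1)] by blast
  have "extends_to (PS b) (PV b) (SS m) (SV m)"
    using coherent[OF m(1)] m(2) unfolding coherent_def by blast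
  then have a: "a n \<in> SS m \<and> SV m (a n) = pi_val top_stage (a n)" for n
    using b(2)[of n] unfolding extends_to_def by (metis subsetD)
  have "Pi_extendible (SS m) (SV m)"
    using extendible[OF m'(1)] unfolding m'(2) by simp
  from conv_dec_in_PiSet[OF this assms(1) a assms(2,3)]
  have "x \<in> PS m'" "PV m' x = y"
    unfolding m'(2) by simp_all
  then show ?thesis
    using top_stage_coherent(2)[OF m'(1)] unfolding extends_to_def by auto
qed

lemma top_stage_Sigma_closed:
  assumes "conv_inc (pi_set top_stage) (pi_val top_stage) a" "is_sup (range a) x"
    and "is_sup (range (\<lambda>n. pi_val top_stage (a n))) y"
  shows "x \<in> pi_set top_stage \<and> pi_val top_stage x = y"
proof -
  obtain b where b: "b \<in> Field W" "\<And>n. a n \<in> PS b \<and> PV b (a n) = pi_val top_stage (a n)"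
    using assms(1) sequence_in_stage unfolding conv_inc_def by blast
  obtain m where m: "m \<in> Field W" "H m = succ_stage (H b)"
    using next_stage[OF b(1)] by blast
  have "Sigma_extendible (PS b) (PV b)"
    using extendible[OF m(1)] unfolding m(2) by simp
  from conv_inc_in_SigmaSet[OF this assms(1) b(2) assms(2,3)]
  have x: "x \<in> SS m" "SV m x = y"
    unfolding m(2) by simp_all
  have "extends_to (SS m) (SV m) (pi_set top_stage) (pi_val top_stage)"
    using top_stage_coherent(3)[OF m(1)] top_stage_coherent(5) by (rule extends_to_trans)
  then show ?thesis
    using x unfolding extends_to_def by auto
qed

lemma collapsed_at_top_stage: "collapsed_at_Pi top_stage"
proof -
  note top = top_stage_coherent
  have "\<And>a x y. conv_dec (pi_set top_stage) (pi_val top_stage) a \<Longrightarrow> is_inf (range a) x \<Longrightarrow>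
      is_inf (range (\<lambda>n. pi_val top_stage (a n))) y \<Longrightarrow> x \<in> pi_set top_stage \<and> pi_val top_stage x = y"
    by (fact top_stage_Pi_closed)
  note Pi = Pi_extendible_closed[OF top(1) this]
  have "\<And>a x y. conv_inc (pi_set top_stage) (pi_val top_stage) a \<Longrightarrow> is_sup (range a) x \<Longrightarrow>
      is_sup (range (\<lambda>n. pi_val top_stage (a n))) y \<Longrightarrow> x \<in> pi_set top_stage \<and> pi_val top_stage x = y"
    by (fact top_stage_Sigma_closed)
  note Sigma = Sigma_extendible_closed[OF top(1) this]
  have same: "sigma_set top_stage = pi_set top_stage"
      "\<And>x. x \<in> pi_set top_stage \<Longrightarrow> pi_val top_stage x = sigma_val top_stage x"
    using top(4,5) unfolding extends_to_def by auto
  have "Pi_extendible (sigma_set top_stage) (sigma_val top_stage)"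
    using Pi_extendible_cong[OF Pi(2) same(2)] unfolding same(1) .
  moreover have "pi_ext top_stage" "sigma_ext top_stage"
    using extendible by (simp_all add: limit_stage_simps)
  ultimately show ?thesis
    unfolding collapsed_at_Pi_def succ_stage_simps
    using Pi Sigma extends_to_PiVal[OF Pi(2)] extends_to_SigmaVal[OF Sigma(2)]
    unfolding extends_to_def by simp
qed

end

lemma omega1_no_max:
  assumes "a \<in> Field omega1"
  shows "\<exists>b. (a, b) \<in> omega1 - Id"
proof -
  have "\<not> finite (Field omega1)"
    using cardSuc_finite[OF natLeq_Card_order] by (simp add: Field_natLeq)
  then show ?thesis
    using infinite_Card_order_limit[OF cardSuc_Card_order[OF natLeq_Card_order] _ assms] by blast
qed

lemma omega1_countably_bounded:
  fixes bs :: "nat \<Rightarrow> nat set"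
  assumes "\<And>n. bs n \<in> Field omega1"
  shows "\<exists>c\<in>Field omega1. \<forall>n. (bs n, c) \<in> omega1"
proof -
  have wo: "wo_rel omega1"
    unfolding wo_rel_def by (simp add: cardSuc_Well_order natLeq_Card_order)
  let ?below = "\<lambda>c. {b. (b, c) \<in> omega1}"
  have chain: "relChain omega1 ?below"
    unfolding relChain_def by (auto intro: wo_rel.TRANS[OF wo, THEN transD])
  have cover: "range bs \<subseteq> (\<Union>c \<in> Field omega1. ?below c)"
    using assms wo_rel.REFL[OF wo] by (auto simp: refl_on_def)
  have "|range bs| \<le>o |UNIV :: nat set|"
    using card_of_image[of bs UNIV] by simp
  then have "|range bs| \<le>o natLeq"
    using card_of_nat ordLeq_ordIso_trans by blast
  from cardSuc_UNION_Cinfinite[OF natLeq_Cinfinite chain cover this]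
  show ?thesis
    by blast
qed

theorem lemma5p32:
  fixes L :: "'v::lattice set" and phi :: "'v \<Rightarrow> 'e::ordered_ab_group_add"
  assumes "sigma_distributive TYPE('v)"
    and "sublattice L"
    and "R_complete TYPE('e)"
    and "valuation L phi"
    and "pi_ext (hier_aleph1 L phi)"
  shows "collapsed_at_Pi (hier_aleph1 L phi)"
proof -
  interpret valuation_hierarchy omega1 L phi
    by unfold_locales (simp add: cardSuc_Well_order natLeq_Card_order)
  have pi: "pi_ext (H b)" if "b \<in> Field omega1" for b
    using assms(5) that unfolding hier_aleph1_def limit_stage_simps by blast
  have "sigma_ext (H b)" if "b \<in> Field omega1" for b
    using sigma_ext_if_pi_ext[OF omega1_no_max pi that] .
  with pi interpret collapsing_hierarchy omega1 L phi
    by unfold_locales (use assms(4) omega1_no_max omega1_countably_bounded in auto)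
  show ?thesis
    unfolding hier_aleph1_def by (rule collapsed_at_top_stage)
qed

end
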